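(* In the setting of the weighted M-posterior, assume there is $\delta>0$ such that the prior density $\pi$ is continuous and positive on the ball $B_{\theta^*}(\delta)\subseteq\Theta$, and that the Weighted M-LAN condition holds. Then for any $\eta,\epsilon>0$ there exist a sequence $r_n\to+\infty$ and an integer $N(\eta,\epsilon)$ such that for all $n>N(\eta,\epsilon)$, $$P_0\Big(\sup_{g,h\in\overline B_{\mathbf 0}(r_n)}f_n(g,h)>\eta\Big)\le\epsilon,$$ where $\overline B_{\mathbf 0}(r)$ is the closed ball of radius $r$ about $\mathbf 0\in\mathbb R^p$.
   Context: $X_1,X_2,\dots$ i.i.d. from $P_0$, $\theta^*$ interior to $\Theta\subseteq\mathbb R^p$, loss $\rho$, score $\psi=\nabla_\theta\rho$, positive weights $\alpha_i$ with $\limsup_n n^{-1}\sum_{i\le n}\alpha_i^2<\infty$, $\bar\alpha_n=n^{-1}\sum_{i\le n}\alpha_i$, weighted M-estimator $\hat\theta^{\boldsymbol\alpha}_\rho$ solving $\sum_i\alpha_i\psi(X_i,\theta)=0$, weighted M-posterior $\pi_n^\rho(\theta\mid F_n^{\boldsymbol\alpha})\propto\exp(-\sum_{i=1}^n\alpha_i\rho(X_i,\theta))\pi(\theta)$. Set $\Delta_n=\sqrt n(\hat\theta^{\boldsymbol\alpha}_\rho-\theta^* )$, $\phi_n(h)=\phi(h\mid\Delta_n,V_{\theta^*}^{-1}/\bar\alpha_n)$ (normal density), $\pi^{\mathrm{W}}_n(h)=n^{-p/2}\pi_n^\rho(\theta^*+h/\sqrt n\mid F_n^{\boldsymbol\alpha})$,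 and $f_n(g,h)=\big\{1-\frac{\phi_n(h)\,\pi^{\mathrm W}_n(g)}{\pi^{\mathrm W}_n(h)\,\phi_n(g)}\big\}^+$. Weighted M-LAN condition: there is a positive definite $V_{\theta^*}$ such that $R_{n,\boldsymbol\alpha}(h)=\sum_{i=1}^n\alpha_i(\rho(X_i,\theta^* )-\rho(X_i,\theta^*+h/\sqrt n))-h^\top\bar\alpha_nV_{\theta^*}\Delta_n+\frac12h^\top\bar\alpha_nV_{\theta^*}h$ satisfies $\sup_{h\in K}|R_{n,\boldsymbol\alpha}(h)|\to0$ in $P_0$-probability for every compact $K$. *)

theory Defs
  imports "HOL-Probability.Probability"
begin

text \<open>Outer probability (used to avoid measurability issues of suprema events).\<close>
definition outer_prob :: "'w measure \<Rightarrow> 'w set \<Rightarrow> real" where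
  "outer_prob M A = Inf {measure M B | B. B \<in> sets M \<and> A \<inter> space M \<subseteq> B}"

definition mvnormal_density :: "real^'d \<Rightarrow> real^'d^'d \<Rightarrow> real^'d \<Rightarrow> real" where
  "mvnormal_density mu S h =
     exp (- (1/2) * ((h - mu) \<bullet> (matrix_inv S *v (h - mu))))
     / sqrt ((2 * pi) ^ CARD('d) * det S)"

definition abar :: "(nat \<Rightarrow> real) \<Rightarrow> nat \<Rightarrow> real" where
  "abar \<alpha> n = (\<Sum>i=1..n. \<alpha> i) / real n"

definition unnorm_post ::
  "('x \<Rightarrow> 'p \<Rightarrow> real) \<Rightarrow> (nat \<Rightarrow> real) \<Rightarrow> ('p \<Rightarrow> real) \<Rightarrow> 'p set
     \<Rightarrow> (nat \<Rightarrow> 'x) \<Rightarrow> nat \<Rightarrow> 'p \<Rightarrow> real" where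
  "unnorm_post \<rho> \<alpha> \<pi> \<Theta> x n \<theta> =
     (if \<theta> \<in> \<Theta> then exp (- (\<Sum>i=1..n. \<alpha> i * \<rho> (x i) \<theta>)) * \<pi> \<theta> else 0)"

definition wpost ::
  "('x \<Rightarrow> 'p::euclidean_space \<Rightarrow> real) \<Rightarrow> (nat \<Rightarrow> real) \<Rightarrow> ('p \<Rightarrow> real) \<Rightarrow> 'p set
     \<Rightarrow> (nat \<Rightarrow> 'x) \<Rightarrow> nat \<Rightarrow> 'p \<Rightarrow> real" where
  "wpost \<rho> \<alpha> \<pi> \<Theta> x n \<theta> =
     unnorm_post \<rho> \<alpha> \<pi> \<Theta> x n \<theta> / (\<integral>t. unnorm_post \<rho> \<alpha> \<pi> \<Theta> x n t \<partial>lborel)"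

definition piW ::
  "('x \<Rightarrow> real^'d \<Rightarrow> real) \<Rightarrow> (nat \<Rightarrow> real) \<Rightarrow> (real^'d \<Rightarrow> real) \<Rightarrow> (real^'d) set
     \<Rightarrow> real^'d \<Rightarrow> (nat \<Rightarrow> 'x) \<Rightarrow> nat \<Rightarrow> real^'d \<Rightarrow> real" where
  "piW \<rho> \<alpha> \<pi> \<Theta> \<theta>s x n h =
     real n powr (- real CARD('d) / 2) * wpost \<rho> \<alpha> \<pi> \<Theta> x n (\<theta>s + (1 / sqrt (real n)) *\<^sub>R h)"

definition phin :: "(nat \<Rightarrow> real) \<Rightarrow> real^'d^'d \<Rightarrow> real^'d \<Rightarrow> nat \<Rightarrow> real^'d \<Rightarrow> real" where
  "phin \<alpha> V \<Delta> n h = mvnormal_density \<Delta> ((1 / abar \<alpha> n) *\<^sub>R matrix_inv V) h"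

definition fn ::
  "('x \<Rightarrow> real^'d \<Rightarrow> real) \<Rightarrow> (nat \<Rightarrow> real) \<Rightarrow> (real^'d \<Rightarrow> real) \<Rightarrow> (real^'d) set
     \<Rightarrow> real^'d \<Rightarrow> real^'d^'d \<Rightarrow> real^'d \<Rightarrow> (nat \<Rightarrow> 'x) \<Rightarrow> nat \<Rightarrow> real^'d \<Rightarrow> real^'d \<Rightarrow> real" where
  "fn \<rho> \<alpha> \<pi> \<Theta> \<theta>s V \<Delta> x n g h =
     max 0 (1 - (phin \<alpha> V \<Delta> n h * piW \<rho> \<alpha> \<pi> \<Theta> \<theta>s x n g)
                / (piW \<rho> \<alpha> \<pi> \<Theta> \<theta>s x n h * phin \<alpha> V \<Delta> n g))"

definition lan_rem ::
  "('x \<Rightarrow> real^'d \<Rightarrow> real) \<Rightarrow> (nat \<Rightarrow> real) \<Rightarrow> real^'d \<Rightarrow> real^'d^'d \<Rightarrow> real^'d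
     \<Rightarrow> (nat \<Rightarrow> 'x) \<Rightarrow> nat \<Rightarrow> real^'d \<Rightarrow> real" where
  "lan_rem \<rho> \<alpha> \<theta>s V \<Delta> x n h =
     (\<Sum>i=1..n. \<alpha> i * (\<rho> (x i) \<theta>s - \<rho> (x i) (\<theta>s + (1 / sqrt (real n)) *\<^sub>R h)))
     - h \<bullet> (abar \<alpha> n *\<^sub>R (V *v \<Delta>))
     + (1/2) * (h \<bullet> (abar \<alpha> n *\<^sub>R (V *v h)))"

end

theory Submission
  imports Defs
begin

text \<open>
  Writing \<open>\<theta>\<^sub>h = \<theta>* + h/\<surd>n\<close>, the quadratic exponent of the Gaussian \<open>\<phi>\<^sub>n\<close> is exactly the
  quadratic part of the LAN expansion, so the ratio inside \<open>f\<^sub>n(g,h)\<close> equals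
  \<open>exp (R\<^sub>n(g) - R\<^sub>n(h)) \<pi>(\<theta>\<^sub>g) / \<pi>(\<theta>\<^sub>h)\<close>; the posterior normalising constants cancel.
  On \<open>cball 0 k\<close> with \<open>k/\<surd>n\<close> small, continuity and positivity of the prior at \<open>\<theta>*\<close>
  make the prior ratio close to 1, and for every fixed \<open>k\<close> the LAN condition makes
  \<open>sup |R\<^sub>n|\<close> over \<open>cball 0 k\<close> small outside an event of small outer probability.
  A diagonal argument lets the radius \<open>k = r\<^sub>n\<close> grow slowly enough to keep both.
\<close>

lemma matrix_inv_eqI:
  fixes A :: "'a::semiring_1^'n^'m"
  assumes "A ** B = mat 1" and "B ** A = mat 1"
  shows "matrix_inv A = B"
proof -
  have inv: "A ** matrix_inv A = mat 1 \<and> matrix_inv A ** A = mat 1"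
    unfolding matrix_inv_def by (rule someI[of _ B]) (use assms in blast)
  have "matrix_inv A = matrix_inv A ** (A ** B)" using assms by simp
  also have "\<dots> = B" using inv by (simp add: matrix_mul_assoc)
  finally show ?thesis .
qed

lemma invertible_if_pos_def:
  fixes V :: "real^'n^'n"
  assumes "\<And>h. h \<noteq> 0 \<Longrightarrow> h \<bullet> (V *v h) > 0"
  shows "invertible V"
proof -
  have "\<forall>x. V *v x = 0 \<longrightarrow> x = 0"
    using assms by (metis inner_zero_right less_irrefl)
  then show ?thesis
    using matrix_left_invertible_ker invertible_left_inverse by blast
qed

lemma matrix_inv_scaleR_matrix_inv:
  fixes V :: "real^'n^'n"
  assumes "invertible V" and "a \<noteq> 0"
  shows "matrix_inv ((1 / a) *\<^sub>R matrix_inv V) = a *\<^sub>R V"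
proof (rule matrix_inv_eqI)
  have "V ** matrix_inv V = mat 1" "matrix_inv V ** V = mat 1"
    using assms(1) matrix_inv_eqI unfolding invertible_def by metis+
  then show "(1 / a) *\<^sub>R matrix_inv V ** a *\<^sub>R V = mat 1"
    and "a *\<^sub>R V ** (1 / a) *\<^sub>R matrix_inv V = mat 1"
    using assms(2) by (simp_all add: matrix_scalar_ac)
qed

lemma det_scaleR_matrix_inv_neq_0:
  fixes V :: "real^'n^'n"
  assumes "invertible V" and "a \<noteq> 0"
  shows "det ((1 / a) *\<^sub>R matrix_inv V) \<noteq> 0"
proof -
  have "invertible (matrix_inv V)"
    using assms(1) matrix_inv_eqI unfolding invertible_def by metis
  then show ?thesis
    using assms(2) by (simp add: scalar_invertible flip: invertible_det_nz)
qed

lemma inner_symmetric_matrix: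
  fixes V :: "real^'n^'n"
  assumes "transpose V = V"
  shows "u \<bullet> (V *v w) = w \<bullet> (V *v u)"
  by (metis assms dot_lmul_matrix inner_commute vector_transpose_matrix)

lemma quadratic_form_diff:
  fixes V :: "real^'n^'n"
  assumes "transpose V = V"
  shows "(y - d) \<bullet> (V *v (y - d)) = y \<bullet> (V *v y) - 2 * (y \<bullet> (V *v d)) + d \<bullet> (V *v d)"
  using inner_symmetric_matrix[OF assms, of d y]
  by (simp add: matrix_vector_mult_diff_distrib inner_diff_left inner_diff_right)

lemma lan_rem_eq:
  fixes V :: "real^'d^'d"
  assumes "transpose V = V"
  shows "lan_rem \<rho> \<alpha> \<theta>s V \<Delta> x n h =
    (\<Sum>i=1..n. \<alpha> i * \<rho> (x i) \<theta>s) - (\<Sum>i=1..n. \<alpha> i * \<rho> (x i) (\<theta>s + (1 / sqrt (real n)) *\<^sub>R h))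
    + abar \<alpha> n / 2 * ((h - \<Delta>) \<bullet> (V *v (h - \<Delta>))) - abar \<alpha> n / 2 * (\<Delta> \<bullet> (V *v \<Delta>))"
  unfolding lan_rem_def quadratic_form_diff[OF assms]
  by (simp add: sum_subtractf algebra_simps)

lemma phin_ratio:
  fixes V :: "real^'d^'d"
  assumes "invertible V" and "abar \<alpha> n > 0"
  shows "phin \<alpha> V \<Delta> n h / phin \<alpha> V \<Delta> n g =
    exp (abar \<alpha> n / 2 * ((g - \<Delta>) \<bullet> (V *v (g - \<Delta>)) - (h - \<Delta>) \<bullet> (V *v (h - \<Delta>))))"
proof -
  define a where "a = abar \<alpha> n"
  have a: "a \<noteq> 0" using assms(2) by (simp add: a_def)
  define C where "C = sqrt ((2 * pi) ^ CARD('d) * det ((1 / a) *\<^sub>R matrix_inv V))"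
  have C: "C \<noteq> 0"
    using det_scaleR_matrix_inv_neq_0[OF assms(1) a] by (simp add: C_def)
  have phin: "phin \<alpha> V \<Delta> n y = exp (- (a / 2) * ((y - \<Delta>) \<bullet> (V *v (y - \<Delta>)))) / C" for y
    unfolding phin_def mvnormal_density_def C_def a_def[symmetric]
      matrix_inv_scaleR_matrix_inv[OF assms(1) a]
    by (simp flip: scaleR_matrix_vector_assoc)
  show ?thesis
    unfolding phin a_def[symmetric] using C
    by (simp add: exp_diff[symmetric] right_diff_distrib)
qed

lemma piW_ratio:
  assumes "n \<ge> 1" and "(\<integral>t. unnorm_post \<rho> \<alpha> \<pi> \<Theta> x n t \<partial>lborel) \<noteq> 0"
    and "\<theta>s + (1 / sqrt (real n)) *\<^sub>R g \<in> \<Theta>" and "\<theta>s + (1 / sqrt (real n)) *\<^sub>R h \<in> \<Theta>"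
    and "\<pi> (\<theta>s + (1 / sqrt (real n)) *\<^sub>R h) \<noteq> 0"
  shows "piW \<rho> \<alpha> \<pi> \<Theta> \<theta>s x n g / piW \<rho> \<alpha> \<pi> \<Theta> \<theta>s x n h =
    exp ((\<Sum>i=1..n. \<alpha> i * \<rho> (x i) (\<theta>s + (1 / sqrt (real n)) *\<^sub>R h))
       - (\<Sum>i=1..n. \<alpha> i * \<rho> (x i) (\<theta>s + (1 / sqrt (real n)) *\<^sub>R g)))
    * (\<pi> (\<theta>s + (1 / sqrt (real n)) *\<^sub>R g) / \<pi> (\<theta>s + (1 / sqrt (real n)) *\<^sub>R h))"
  using assms
  by (simp add: piW_def wpost_def unnorm_post_def exp_diff exp_minus field_simps)

lemma fn_eq:
  fixes V :: "real^'d^'d"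
  assumes n: "n \<ge> 1" and a: "abar \<alpha> n > 0"
    and Z: "(\<integral>t. unnorm_post \<rho> \<alpha> \<pi> \<Theta> x n t \<partial>lborel) \<noteq> 0"
    and V_sym: "transpose V = V" and V_inv: "invertible V"
    and g: "\<theta>s + (1 / sqrt (real n)) *\<^sub>R g \<in> \<Theta>" and h: "\<theta>s + (1 / sqrt (real n)) *\<^sub>R h \<in> \<Theta>"
    and ph: "\<pi> (\<theta>s + (1 / sqrt (real n)) *\<^sub>R h) \<noteq> 0"
  shows "fn \<rho> \<alpha> \<pi> \<Theta> \<theta>s V \<Delta> x n g h =
    max 0 (1 - exp (lan_rem \<rho> \<alpha> \<theta>s V \<Delta> x n g - lan_rem \<rho> \<alpha> \<theta>s V \<Delta> x n h)
      * (\<pi> (\<theta>s + (1 / sqrt (real n)) *\<^sub>R g) / \<pi> (\<theta>s + (1 / sqrt (real n)) *\<^sub>R h)))"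
proof -
  have "(phin \<alpha> V \<Delta> n h * piW \<rho> \<alpha> \<pi> \<Theta> \<theta>s x n g) / (piW \<rho> \<alpha> \<pi> \<Theta> \<theta>s x n h * phin \<alpha> V \<Delta> n g)
    = phin \<alpha> V \<Delta> n h / phin \<alpha> V \<Delta> n g * (piW \<rho> \<alpha> \<pi> \<Theta> \<theta>s x n g / piW \<rho> \<alpha> \<pi> \<Theta> \<theta>s x n h)"
    by (simp add: mult.commute)
  also have "\<dots> = exp (lan_rem \<rho> \<alpha> \<theta>s V \<Delta> x n g - lan_rem \<rho> \<alpha> \<theta>s V \<Delta> x n h)
      * (\<pi> (\<theta>s + (1 / sqrt (real n)) *\<^sub>R g) / \<pi> (\<theta>s + (1 / sqrt (real n)) *\<^sub>R h))"
    unfolding phin_ratio[OF V_inv a] piW_ratio[OF n Z g h ph] lan_rem_eq[OF V_sym]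
    by (simp add: exp_add[symmetric] algebra_simps)
  finally show ?thesis unfolding fn_def by simp
qed

lemma continuous_ratio_ge_near:
  fixes f :: "'a::metric_space \<Rightarrow> real"
  assumes "isCont f x" and "f x > 0" and "0 < s" and "s < 1"
  shows "\<exists>r>0. \<forall>y\<in>ball x r. \<forall>z\<in>ball x r. s \<le> f y / f z"
proof -
  define q where "q = sqrt s"
  have q: "0 < q" "q < 1" "q * q = s" using assms(3,4) by (simp_all add: q_def)
  have "(f \<longlongrightarrow> f x) (nhds x)"
    using assms(1) by (simp add: isCont_def tendsto_at_iff_tendsto_nhds)
  moreover have "q * f x < f x" and "f x < f x / q" using q assms(2) by (simp_all add: field_simps)
  ultimately have "\<forall>\<^sub>F y in nhds x. q * f x < f y \<and> f y < f x / q"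
    by (intro eventually_conj order_tendstoD)
  then obtain r where r: "r > 0" and near: "\<And>y. dist y x < r \<Longrightarrow> q * f x < f y \<and> f y < f x / q"
    unfolding eventually_nhds_metric by blast
  have "s \<le> f y / f z" if "y \<in> ball x r" "z \<in> ball x r" for y z
  proof -
    have "q * f x > 0" using q assms(2) by simp
    have "s = (q * f x) / (f x / q)" using q assms(2) by (simp add: field_simps)
    also have "\<dots> \<le> f y / f z"
      using near[of y] near[of z] that \<open>q * f x > 0\<close> by (intro frac_le) (auto simp: dist_commute)
    finally show ?thesis .
  qed
  with r show ?thesis by blast
qed

lemma integral_pos_if_pos_on_ball:
  fixes f :: "'a::euclidean_space \<Rightarrow> real"
  assumes "integrable lborel f" and "\<And>t. f t \<ge> 0" and "\<And>t. t \<in> ball c d \<Longrightarrow> f t > 0" and "d > 0"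
  shows "integral\<^sup>L lborel f > 0"
proof (rule ccontr)
  assume "\<not> integral\<^sup>L lborel f > 0"
  moreover have "integral\<^sup>L lborel f \<ge> 0" using assms(2) by (simp add: integral_nonneg_AE)
  ultimately have "integral\<^sup>L lborel f = 0" by simp
  then have "AE t in lborel. f t = 0" using integral_nonneg_eq_0_iff_AE[OF assms(1)] assms(2) by simp
  then have "AE t in lborel. t \<notin> ball c d" by eventually_elim (use assms(3) in force)
  then have "emeasure lborel (ball c d) = 0"
    by (subst (asm) AE_iff_measurable[of "ball c d"]) auto
  with content_ball_pos[OF assms(4), of c] show False by (simp add: measure_def)
qed

lemma outer_prob_mono:
  assumes "A \<subseteq> B"
  shows "outer_prob M A \<le> outer_prob M B"
  unfolding outer_prob_def
proof (rule cInf_superset_mono)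
  show "{measure M C |C. C \<in> sets M \<and> B \<inter> space M \<subseteq> C} \<noteq> {}" by blast
  show "bdd_below {measure M C |C. C \<in> sets M \<and> A \<inter> space M \<subseteq> C}"
    by (rule bdd_belowI[of _ 0]) auto
qed (use assms in blast)

lemma exists_radius_to_infinity:
  assumes "\<And>k::nat. \<forall>\<^sub>F n in sequentially. P n (real k)"
  shows "\<exists>r::nat \<Rightarrow> real. filterlim r at_top sequentially \<and> (\<exists>N. \<forall>n>N. P n (r n))"
proof -
  obtain M where M: "\<And>k n. n \<ge> M k \<Longrightarrow> P n (real k)"
    using assms unfolding eventually_sequentially by metis
  define M' where "M' k = k + (\<Sum>j\<le>k. M j)" for k
  have M'_ge: "M j \<le> M' k" if "j \<le> k" for j k
    using member_le_sum[of j "{..k}" M] that by (simp add: M'_def)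
  define r where "r n = (GREATEST k. M' k \<le> n)" for n
  have r: "k \<le> r n \<and> M' (r n) \<le> n" if "M' k \<le> n" for k n
  proof -
    have bounded: "y \<le> n" if "M' y \<le> n" for y using that by (simp add: M'_def)
    show ?thesis
      unfolding r_def
      using Greatest_le_nat[of "\<lambda>k. M' k \<le> n", OF that bounded]
        GreatestI_nat[of "\<lambda>k. M' k \<le> n", OF that bounded] by blast
  qed
  have "filterlim r at_top sequentially"
    unfolding filterlim_at_top eventually_sequentially using r by blast
  moreover have "P n (real (r n))" if "n > M' 0" for n
    using r[of 0 n] M'_ge[of "r n" "r n"] M that by simp
  ultimately show ?thesis
    using filterlim_compose[OF filterlim_real_sequentially] by (intro exI[of _ "\<lambda>n. real (r n)"]) blast
qed

lemma translate_scaled_in_ball: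
  fixes y :: "'a::real_normed_vector"
  assumes "norm y \<le> k" and "k < r * sqrt (real n)"
  shows "\<theta> + (1 / sqrt (real n)) *\<^sub>R y \<in> ball \<theta> r"
proof -
  have "0 < r * sqrt (real n)" using assms norm_ge_zero[of y] by linarith
  then have sn: "sqrt (real n) > 0" by (simp add: zero_less_mult_iff)
  have "norm y / sqrt (real n) < r"
    using assms sn by (simp add: divide_less_eq)
  then show ?thesis using sn by (simp add: dist_norm)
qed

locale weighted_M_posterior =
  fixes \<alpha> :: "nat \<Rightarrow> real" and \<pi> :: "real^'d \<Rightarrow> real" and \<Theta> :: "(real^'d) set"
    and \<theta>s :: "real^'d" and \<delta> :: real and V :: "real^'d^'d"
  assumes alpha_pos: "\<And>i. \<alpha> i > 0"
    and prior_nonneg: "\<And>\<theta>. \<theta> \<in> \<Theta> \<Longrightarrow> \<pi> \<theta> \<ge> 0"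
    and delta_pos: "\<delta> > 0"
    and ball_sub: "ball \<theta>s \<delta> \<subseteq> \<Theta>"
    and prior_cont: "continuous_on (ball \<theta>s \<delta>) \<pi>"
    and prior_pos: "\<And>\<theta>. \<theta> \<in> ball \<theta>s \<delta> \<Longrightarrow> \<pi> \<theta> > 0"
    and V_sym: "transpose V = V"
    and V_pd: "\<And>h. h \<noteq> 0 \<Longrightarrow> h \<bullet> (V *v h) > 0"
begin

lemma abar_pos: "n \<ge> 1 \<Longrightarrow> abar \<alpha> n > 0"
  unfolding abar_def using alpha_pos by (intro divide_pos_pos sum_pos) auto

lemma normaliser_pos:
  assumes "integrable lborel (unnorm_post \<rho> \<alpha> \<pi> \<Theta> x n)"
  shows "(\<integral>t. unnorm_post \<rho> \<alpha> \<pi> \<Theta> x n t \<partial>lborel) > 0"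
proof (rule integral_pos_if_pos_on_ball[OF assms _ _ delta_pos])
  show "0 \<le> unnorm_post \<rho> \<alpha> \<pi> \<Theta> x n t" for t
    unfolding unnorm_post_def using prior_nonneg by simp
  show "0 < unnorm_post \<rho> \<alpha> \<pi> \<Theta> x n t" if "t \<in> ball \<theta>s \<delta>" for t
    unfolding unnorm_post_def using prior_pos[OF that] ball_sub that by auto
qed

lemma prior_ratio_near:
  assumes "0 < s" and "s < 1"
  obtains r where "0 < r" and "r \<le> \<delta>" and "\<forall>\<theta>\<in>ball \<theta>s r. \<forall>\<theta>'\<in>ball \<theta>s r. s \<le> \<pi> \<theta> / \<pi> \<theta>'"
proof -
  have "isCont \<pi> \<theta>s"
    using continuous_on_interior[OF prior_cont] delta_pos by (simp add: interior_open)
  moreover have "\<pi> \<theta>s > 0" using prior_pos delta_pos by simp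
  ultimately obtain r
    where "r > 0" and "\<forall>\<theta>\<in>ball \<theta>s r. \<forall>\<theta>'\<in>ball \<theta>s r. s \<le> \<pi> \<theta> / \<pi> \<theta>'"
    using continuous_ratio_ge_near assms by blast
  then show ?thesis
    using that[of "min r \<delta>"] delta_pos by auto
qed

lemma fn_le_if_lan_rem_le:
  assumes Z: "integrable lborel (unnorm_post \<rho> \<alpha> \<pi> \<Theta> x n)"
    and s: "0 < s" "s < 1"
    and r: "r \<le> \<delta>" "\<forall>\<theta>\<in>ball \<theta>s r. \<forall>\<theta>'\<in>ball \<theta>s r. s \<le> \<pi> \<theta> / \<pi> \<theta>'"
    and gh: "norm g \<le> k" "norm h \<le> k" "k < r * sqrt (real n)"
    and R: "\<bar>lan_rem \<rho> \<alpha> \<theta>s V \<Delta> x n g\<bar> \<le> - ln s / 2" "\<bar>lan_rem \<rho> \<alpha> \<theta>s V \<Delta> x n h\<bar> \<le> - ln s / 2"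
  shows "fn \<rho> \<alpha> \<pi> \<Theta> \<theta>s V \<Delta> x n g h \<le> 1 - s * s"
proof -
  define \<theta>g where "\<theta>g = \<theta>s + (1 / sqrt (real n)) *\<^sub>R g"
  define \<theta>h where "\<theta>h = \<theta>s + (1 / sqrt (real n)) *\<^sub>R h"
  have n: "n \<ge> 1"
    using gh norm_ge_zero[of g] by (cases n) (auto simp: not_less_eq_eq)
  have near: "\<theta>g \<in> ball \<theta>s r" "\<theta>h \<in> ball \<theta>s r"
    using translate_scaled_in_ball gh by (auto simp: \<theta>g_def \<theta>h_def)
  then have in_ball: "\<theta>g \<in> ball \<theta>s \<delta>" "\<theta>h \<in> ball \<theta>s \<delta>" using r(1) by auto
  have ratio: "s \<le> \<pi> \<theta>g / \<pi> \<theta>h" using r(2) near by blast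
  have "s \<le> exp (lan_rem \<rho> \<alpha> \<theta>s V \<Delta> x n g - lan_rem \<rho> \<alpha> \<theta>s V \<Delta> x n h)"
  proof -
    have "s = exp (- 2 * (- ln s / 2))" using s(1) by simp
    also have "\<dots> \<le> exp (lan_rem \<rho> \<alpha> \<theta>s V \<Delta> x n g - lan_rem \<rho> \<alpha> \<theta>s V \<Delta> x n h)"
      using R by simp
    finally show ?thesis .
  qed
  then have "s * s \<le> exp (lan_rem \<rho> \<alpha> \<theta>s V \<Delta> x n g - lan_rem \<rho> \<alpha> \<theta>s V \<Delta> x n h) * (\<pi> \<theta>g / \<pi> \<theta>h)"
    using ratio s(1) by (intro mult_mono) auto
  moreover have "fn \<rho> \<alpha> \<pi> \<Theta> \<theta>s V \<Delta> x n g h =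
      max 0 (1 - exp (lan_rem \<rho> \<alpha> \<theta>s V \<Delta> x n g - lan_rem \<rho> \<alpha> \<theta>s V \<Delta> x n h) * (\<pi> \<theta>g / \<pi> \<theta>h))"
    unfolding \<theta>g_def \<theta>h_def
    using normaliser_pos[OF Z] in_ball ball_sub prior_pos[of \<theta>h]
    by (intro fn_eq n abar_pos V_sym invertible_if_pos_def V_pd) (auto simp: \<theta>g_def \<theta>h_def)
  moreover have "s * s \<le> 1" using s by (simp add: mult_le_one)
  ultimately show ?thesis by simp
qed

lemma fn_gt_subset_lan_rem_gt:
  assumes proper: "\<And>\<omega>. \<omega> \<in> space M \<Longrightarrow> integrable lborel (unnorm_post \<rho> \<alpha> \<pi> \<Theta> (x \<omega>) n)"
    and s: "0 < s" "s < 1" "1 - \<eta> \<le> s * s"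
    and r: "r \<le> \<delta>" "\<forall>\<theta>\<in>ball \<theta>s r. \<forall>\<theta>'\<in>ball \<theta>s r. s \<le> \<pi> \<theta> / \<pi> \<theta>'"
    and k: "k < r * sqrt (real n)"
  shows "{\<omega> \<in> space M. \<exists>g\<in>cball 0 k. \<exists>h\<in>cball 0 k. fn \<rho> \<alpha> \<pi> \<Theta> \<theta>s V (\<Delta> \<omega>) (x \<omega>) n g h > \<eta>}
    \<subseteq> {\<omega> \<in> space M. \<exists>h\<in>cball 0 k. \<bar>lan_rem \<rho> \<alpha> \<theta>s V (\<Delta> \<omega>) (x \<omega>) n h\<bar> > - ln s / 2}"
proof safe
  fix \<omega> g h
  assume \<omega>: "\<omega> \<in> space M" and g: "g \<in> cball 0 k" and h: "h \<in> cball 0 k"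
    and bad: "fn \<rho> \<alpha> \<pi> \<Theta> \<theta>s V (\<Delta> \<omega>) (x \<omega>) n g h > \<eta>"
  show "\<exists>h\<in>cball 0 k. \<bar>lan_rem \<rho> \<alpha> \<theta>s V (\<Delta> \<omega>) (x \<omega>) n h\<bar> > - ln s / 2"
  proof (rule ccontr)
    assume "\<not> ?thesis"
    then have "fn \<rho> \<alpha> \<pi> \<Theta> \<theta>s V (\<Delta> \<omega>) (x \<omega>) n g h \<le> 1 - s * s"
      using g h k by (intro fn_le_if_lan_rem_le[OF proper[OF \<omega>] s(1,2) r]) (auto simp: not_less)
    with bad s(3) show False by linarith
  qed
qed

end

theorem mainTheorem3:
  fixes M :: "'w measure" and Mx :: "'x measure" and P0 :: "'x measure"
    and X :: "nat \<Rightarrow> 'w \<Rightarrow> 'x"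
    and \<Theta> :: "(real^'d) set" and \<theta>s :: "real^'d"
    and \<rho> :: "'x \<Rightarrow> real^'d \<Rightarrow> real" and \<psi> :: "'x \<Rightarrow> real^'d \<Rightarrow> real^'d"
    and \<alpha> :: "nat \<Rightarrow> real"
    and \<theta>hat :: "nat \<Rightarrow> 'w \<Rightarrow> real^'d"
    and \<pi> :: "real^'d \<Rightarrow> real"
    and V :: "real^'d^'d"
    and \<delta> :: real
  defines "\<Delta> \<equiv> \<lambda>n \<omega>. sqrt (real n) *\<^sub>R (\<theta>hat n \<omega> - \<theta>s)"
  assumes P: "prob_space M"
    and X_meas: "\<And>i. X i \<in> measurable M Mx"
    and X_indep: "prob_space.indep_vars M (\<lambda>_. Mx) X UNIV"
    and X_distr: "\<And>i. distr M Mx (X i) = P0"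
    and theta_int: "\<theta>s \<in> interior \<Theta>"
    and score: "\<And>x \<theta>. \<theta> \<in> interior \<Theta> \<Longrightarrow> (\<rho> x has_derivative (\<lambda>v. \<psi> x \<theta> \<bullet> v)) (at \<theta>)"
    and alpha_pos: "\<And>i. \<alpha> i > 0"
    and alpha_sq: "limsup (\<lambda>n. ereal ((\<Sum>i=1..n. (\<alpha> i)\<^sup>2) / real n)) < \<infinity>"
    and est_in: "\<And>n \<omega>. \<omega> \<in> space M \<Longrightarrow> \<theta>hat n \<omega> \<in> \<Theta>"
    and est_eq: "\<And>n \<omega>. \<omega> \<in> space M \<Longrightarrow> (\<Sum>i=1..n. \<alpha> i *\<^sub>R \<psi> (X i \<omega>) (\<theta>hat n \<omega>)) = 0"
    and prior_nonneg: "\<And>\<theta>. \<theta> \<in> \<Theta> \<Longrightarrow> \<pi> \<theta> \<ge> 0"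
    and post_proper: "\<And>n \<omega>. \<omega> \<in> space M \<Longrightarrow>
          integrable lborel (unnorm_post \<rho> \<alpha> \<pi> \<Theta> (\<lambda>i. X i \<omega>) n)"
    and delta_pos: "\<delta> > 0"
    and ball_sub: "ball \<theta>s \<delta> \<subseteq> \<Theta>"
    and prior_cont: "continuous_on (ball \<theta>s \<delta>) \<pi>"
    and prior_pos: "\<And>\<theta>. \<theta> \<in> ball \<theta>s \<delta> \<Longrightarrow> \<pi> \<theta> > 0"
    and V_sym: "transpose V = V"
    and V_pd: "\<And>h. h \<noteq> 0 \<Longrightarrow> h \<bullet> (V *v h) > 0"
    and LAN: "\<And>K e. compact K \<Longrightarrow> e > 0 \<Longrightarrow>
          (\<lambda>n. outer_prob M {\<omega> \<in> space M. \<exists>h\<in>K.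
              \<bar>lan_rem \<rho> \<alpha> \<theta>s V (\<Delta> n \<omega>) (\<lambda>i. X i \<omega>) n h\<bar> > e}) \<longlonglongrightarrow> 0"
  shows "\<forall>\<eta>>0. \<forall>\<epsilon>>0. \<exists>r :: nat \<Rightarrow> real. filterlim r at_top sequentially \<and>
          (\<exists>N::nat. \<forall>n>N.
             outer_prob M {\<omega> \<in> space M. \<exists>g\<in>cball 0 (r n). \<exists>h\<in>cball 0 (r n).
                fn \<rho> \<alpha> \<pi> \<Theta> \<theta>s V (\<Delta> n \<omega>) (\<lambda>i. X i \<omega>) n g h > \<eta>} \<le> \<epsilon>)"
proof (intro allI impI exists_radius_to_infinity)
  fix \<eta> \<epsilon> :: real and k :: nat
  assume \<eta>: "\<eta> > 0" and \<epsilon>: "\<epsilon> > 0"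
  interpret weighted_M_posterior \<alpha> \<pi> \<Theta> \<theta>s \<delta> V
    using alpha_pos prior_nonneg delta_pos ball_sub prior_cont prior_pos V_sym V_pd by unfold_locales
  define s where "s = sqrt (max (1 / 2) (1 - \<eta>))"
  have "s * s = max (1 / 2) (1 - \<eta>)" by (simp add: s_def)
  then have s: "0 < s" "s < 1" "1 - \<eta> \<le> s * s" using \<eta> by (simp_all add: s_def)
  obtain r where "0 < r" and r: "r \<le> \<delta>" "\<forall>\<theta>\<in>ball \<theta>s r. \<forall>\<theta>'\<in>ball \<theta>s r. s \<le> \<pi> \<theta> / \<pi> \<theta>'"
    using prior_ratio_near[OF s(1,2)] by blast
  have "filterlim (\<lambda>n. r * sqrt (real n)) at_top sequentially"
    using \<open>0 < r\<close> filterlim_compose[OF sqrt_at_top filterlim_real_sequentially]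
    by (rule filterlim_tendsto_pos_mult_at_top[OF tendsto_const])
  then have "\<forall>\<^sub>F n in sequentially. real k < r * sqrt (real n)"
    by (simp add: filterlim_at_top_dense)
  moreover have "\<forall>\<^sub>F n in sequentially. outer_prob M {\<omega> \<in> space M. \<exists>h\<in>cball 0 (real k).
      \<bar>lan_rem \<rho> \<alpha> \<theta>s V (\<Delta> n \<omega>) (\<lambda>i. X i \<omega>) n h\<bar> > - ln s / 2} < \<epsilon>"
    using order_tendstoD(2)[OF LAN[OF compact_cball] \<epsilon>] s by simp
  ultimately show "\<forall>\<^sub>F n in sequentially. outer_prob M {\<omega> \<in> space M. \<exists>g\<in>cball 0 (real k).
      \<exists>h\<in>cball 0 (real k). fn \<rho> \<alpha> \<pi> \<Theta> \<theta>s V (\<Delta> n \<omega>) (\<lambda>i. X i \<omega>) n g h > \<eta>} \<le> \<epsilon>"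
  proof eventually_elim
    case (elim n)
    have "outer_prob M {\<omega> \<in> space M. \<exists>g\<in>cball 0 (real k). \<exists>h\<in>cball 0 (real k).
        fn \<rho> \<alpha> \<pi> \<Theta> \<theta>s V (\<Delta> n \<omega>) (\<lambda>i. X i \<omega>) n g h > \<eta>}
      \<le> outer_prob M {\<omega> \<in> space M. \<exists>h\<in>cball 0 (real k).
        \<bar>lan_rem \<rho> \<alpha> \<theta>s V (\<Delta> n \<omega>) (\<lambda>i. X i \<omega>) n h\<bar> > - ln s / 2}"
      using post_proper s r elim(1)
      by (intro outer_prob_mono fn_gt_subset_lan_rem_gt[where x = "\<lambda>\<omega> i. X i \<omega>" and \<Delta> = "\<Delta> n"])
    with elim(2) show ?case by linarith
  qed
qed

end
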